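(* Let $((A_i,B_i))_{i\in\mathbb N}$ be an increasing sequence of oriented separations of a locally finite graph $G$ whose underlying separations are tight, and let $(A,B)=(\bigcup_iA_i,\bigcap_iB_i)$. If $B\neq\emptyset$, then every $v\in A\cap B$ has a neighbour $w\in B\setminus A$ such that for infinitely many $i\in\mathbb N$ the vertex $w$ lies in a tight component $K_i$ of $G-(A_i\cap B_i)$ with $V(K_i)\subseteq B_i\setminus A_i$. In particular, $N_G(B\setminus A)=A\cap B$.
   Context: A separation of $G$ is an unordered pair $\{A,B\}$ of subsets of $V(G)$ with $A\cup B=V(G)$ and no edge between $A\setminus B$ and $B\setminus A$; oriented separations are ordered by $(A,B)\le(C,D)$ iff $A\subseteq C$ and $B\supseteq D$. For $X\subseteq V(G)$, a component $K$ of $G-X$ is tight if $N_G(K)=X$. A separation $\{A,B\}$ is tight if both $A\setminus B$ and $B\setminus A$ contain the vertex set of a tight component of $G-(A\cap B)$. *)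

theory Defs
  imports Main
begin

definition graph :: "'a set \<Rightarrow> ('a \<Rightarrow> 'a \<Rightarrow> bool) \<Rightarrow> bool" where
  "graph V E \<longleftrightarrow> (\<forall>x y. E x y \<longrightarrow> x \<in> V \<and> y \<in> V \<and> E y x \<and> x \<noteq> y)"

definition locally_finite :: "'a set \<Rightarrow> ('a \<Rightarrow> 'a \<Rightarrow> bool) \<Rightarrow> bool" where
  "locally_finite V E \<longleftrightarrow> (\<forall>v\<in>V. finite {w. E v w})"

definition nbh :: "'a set \<Rightarrow> ('a \<Rightarrow> 'a \<Rightarrow> bool) \<Rightarrow> 'a set \<Rightarrow> 'a set" where
  "nbh V E S = {w \<in> V - S. \<exists>s\<in>S. E s w}"

definition component :: "'a set \<Rightarrow> ('a \<Rightarrow> 'a \<Rightarrow> bool) \<Rightarrow> 'a set \<Rightarrow> 'a set \<Rightarrow> bool" where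
  "component V E X K \<longleftrightarrow>
     (\<exists>x \<in> V - X. K = {y. (\<lambda>a b. E a b \<and> a \<in> V - X \<and> b \<in> V - X)\<^sup>*\<^sup>* x y})"

definition tight_component :: "'a set \<Rightarrow> ('a \<Rightarrow> 'a \<Rightarrow> bool) \<Rightarrow> 'a set \<Rightarrow> 'a set \<Rightarrow> bool" where
  "tight_component V E X K \<longleftrightarrow> component V E X K \<and> nbh V E K = X"

text \<open>{A,B} is a separation (orientation irrelevant for this predicate).\<close>
definition separation :: "'a set \<Rightarrow> ('a \<Rightarrow> 'a \<Rightarrow> bool) \<Rightarrow> 'a set \<Rightarrow> 'a set \<Rightarrow> bool" where
  "separation V E A B \<longleftrightarrow> A \<union> B = V \<and> (\<forall>x\<in>A - B. \<forall>y\<in>B - A. \<not> E x y)"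

definition tight_separation :: "'a set \<Rightarrow> ('a \<Rightarrow> 'a \<Rightarrow> bool) \<Rightarrow> 'a set \<Rightarrow> 'a set \<Rightarrow> bool" where
  "tight_separation V E A B \<longleftrightarrow> separation V E A B \<and>
     (\<exists>K. tight_component V E (A \<inter> B) K \<and> K \<subseteq> A - B) \<and>
     (\<exists>K. tight_component V E (A \<inter> B) K \<and> K \<subseteq> B - A)"

definition sep_le :: "'a set \<times> 'a set \<Rightarrow> 'a set \<times> 'a set \<Rightarrow> bool" where
  "sep_le AB CD \<longleftrightarrow> fst AB \<subseteq> fst CD \<and> snd CD \<subseteq> snd AB"

end

theory Submission
  imports Defs
begin

text \<open>Every vertex v of the limit separator A \<inter> B lies in the separators of all
late separations (A_i, B_i), and since a tight component of G - (A_i \<inter> B_i) inside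
B_i - A_i has the whole separator as its neighbourhood, v has a neighbour in it.
As v has only finitely many neighbours, one neighbour w is chosen for infinitely
many i; being in B_i - A_i for arbitrarily large i, it lies in B - A.
The limit (A, B) is itself a separation, so N(B - A) \<subseteq> A \<inter> B, and the
neighbours w give the converse inclusion.\<close>

lemma graph_sym: "graph V E \<Longrightarrow> E x y \<Longrightarrow> E y x"
  by (auto simp: graph_def)

lemma separation_limit:
  fixes As Bs :: "nat \<Rightarrow> 'a set"
  assumes "\<And>i. separation V E (As i) (Bs i)" and "mono As" and "antimono Bs"
  shows "separation V E (\<Union>i. As i) (\<Inter>i. Bs i)"
  unfolding separation_def
proof (intro conjI ballI)
  have "As i \<union> Bs i = V" for i using assms(1) by (simp add: separation_def)
  then show "(\<Union>i. As i) \<union> (\<Inter>i. Bs i) = V" by blast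
next
  fix x y assume x: "x \<in> (\<Union>i. As i) - (\<Inter>i. Bs i)" and y: "y \<in> (\<Inter>i. Bs i) - (\<Union>i. As i)"
  then obtain i j where "x \<in> As i" "x \<notin> Bs j" by blast
  moreover have "As i \<subseteq> As (max i j)" "Bs (max i j) \<subseteq> Bs j"
    using monoD[OF assms(2)] antimonoD[OF assms(3)] by simp_all
  ultimately have "x \<in> As (max i j) - Bs (max i j)" by blast
  moreover have "y \<in> Bs (max i j) - As (max i j)" using y by blast
  ultimately show "\<not> E x y" using assms(1) by (auto simp: separation_def)
qed

lemma nbh_separation_side:
  assumes "graph V E" and "separation V E A B"
  shows "nbh V E (B - A) \<subseteq> A \<inter> B"
proof
  fix x assume "x \<in> nbh V E (B - A)"
  then obtain s where x: "x \<in> V" "x \<notin> B - A" and s: "s \<in> B - A" "E s x"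
    by (auto simp: nbh_def)
  have "x \<notin> A - B"
    using assms(2) s graph_sym[OF assms(1) s(2)] by (auto simp: separation_def)
  then show "x \<in> A \<inter> B" using x assms(2) by (auto simp: separation_def)
qed

lemma tight_component_adjacent:
  assumes "graph V E" and "tight_component V E X K" and "v \<in> X"
  shows "\<exists>w\<in>K. E v w"
proof -
  have "v \<in> nbh V E K" using assms(2,3) by (simp add: tight_component_def)
  then obtain s where "s \<in> K" "E s v" by (auto simp: nbh_def)
  then show ?thesis using graph_sym[OF assms(1)] by blast
qed

lemma infinitely_often_in_limit_side:
  fixes As Bs :: "nat \<Rightarrow> 'a set"
  assumes "mono As" and "antimono Bs" and "infinite {i. w \<in> Bs i - As i}"
  shows "w \<in> (\<Inter>i. Bs i) - (\<Union>i. As i)"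
proof -
  have "w \<in> Bs i - As i" for i
  proof -
    obtain j where "j \<ge> i" "w \<in> Bs j - As j"
      using assms(3) finite_nat_set_iff_bounded_le[of "{i. w \<in> Bs i - As i}"] nat_le_linear
      by blast
    then show ?thesis using monoD[OF assms(1), of i j] antimonoD[OF assms(2), of i j] by blast
  qed
  then show ?thesis by blast
qed

lemma limit_separator_persistent_neighbour:
  fixes As Bs :: "nat \<Rightarrow> 'a set"
  assumes "graph V E" and "locally_finite V E"
    and tight: "\<And>i. tight_separation V E (As i) (Bs i)"
    and "mono As" and "antimono Bs"
    and v: "v \<in> (\<Union>i. As i) \<inter> (\<Inter>i. Bs i)"
  shows "\<exists>w. E v w \<and> w \<in> (\<Inter>i. Bs i) - (\<Union>i. As i) \<and>
             infinite {i. \<exists>K. tight_component V E (As i \<inter> Bs i) K \<and> w \<in> K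
                               \<and> K \<subseteq> Bs i - As i}"
    (is "\<exists>w. E v w \<and> w \<in> ?R \<and> infinite {i. ?P i w}")
proof -
  obtain j where "v \<in> As j" using v by blast
  then have "v \<in> V" using tight[of j] by (auto simp: tight_separation_def separation_def)
  then have fin: "finite {w. E v w}" using assms(2) by (simp add: locally_finite_def)
  have "\<forall>i\<in>{j..}. \<exists>w\<in>{w. E v w}. ?P i w"
  proof
    fix i assume "i \<in> {j..}"
    obtain K where K: "tight_component V E (As i \<inter> Bs i) K" "K \<subseteq> Bs i - As i"
      using tight[of i] by (auto simp: tight_separation_def)
    have "v \<in> As i \<inter> Bs i"
      using monoD[OF \<open>mono As\<close>, of j i] \<open>v \<in> As j\<close> v \<open>i \<in> {j..}\<close> by auto
    then show "\<exists>w\<in>{w. E v w}. ?P i w"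
      using tight_component_adjacent[OF assms(1) K(1)] K by blast
  qed
  from pigeonhole_infinite_rel[OF infinite_Ici fin this]
  obtain w where "E v w" and late: "infinite {i \<in> {j..}. ?P i w}" by blast
  from late have inf: "infinite {i. ?P i w}" by (rule infinite_super[rotated]) auto
  then have "infinite {i. w \<in> Bs i - As i}" by (rule infinite_super[rotated]) blast
  then have "w \<in> ?R" by (rule infinitely_often_in_limit_side[OF assms(4,5)])
  with \<open>E v w\<close> inf show ?thesis by blast
qed

lemma nbh_limit_side:
  fixes As Bs :: "nat \<Rightarrow> 'a set"
  assumes "graph V E" and "locally_finite V E"
    and tight: "\<And>i. tight_separation V E (As i) (Bs i)"
    and "mono As" and "antimono Bs"
  shows "nbh V E ((\<Inter>i. Bs i) - (\<Union>i. As i)) = (\<Union>i. As i) \<inter> (\<Inter>i. Bs i)"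
    (is "nbh V E ?R = ?S")
proof
  have limit: "separation V E (\<Union>i. As i) (\<Inter>i. Bs i)"
    using separation_limit[OF _ assms(4,5)] tight by (simp add: tight_separation_def)
  then show "nbh V E ?R \<subseteq> ?S" by (rule nbh_separation_side[OF assms(1)])
  show "?S \<subseteq> nbh V E ?R"
  proof
    fix v assume v: "v \<in> ?S"
    then obtain w where "E v w" "w \<in> ?R"
      using limit_separator_persistent_neighbour[OF assms v] by blast
    moreover have "v \<in> V" using v limit unfolding separation_def by blast
    moreover have "v \<notin> ?R" using v by blast
    ultimately show "v \<in> nbh V E ?R"
      unfolding nbh_def using graph_sym[OF assms(1) \<open>E v w\<close>] by blast
  qed
qed

theorem mainTheorem7:
  fixes V :: "'a set" and E :: "'a \<Rightarrow> 'a \<Rightarrow> bool"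
    and As Bs :: "nat \<Rightarrow> 'a set"
  assumes "graph V E" and "locally_finite V E"
    and "\<And>i. tight_separation V E (As i) (Bs i)"
    and "\<And>i j. i \<le> j \<Longrightarrow> sep_le (As i, Bs i) (As j, Bs j)"
    and "(\<Inter>i. Bs i) \<noteq> {}"
  shows "(\<forall>v \<in> (\<Union>i. As i) \<inter> (\<Inter>i. Bs i).
            \<exists>w. E v w \<and> w \<in> (\<Inter>i. Bs i) - (\<Union>i. As i) \<and>
                infinite {i. \<exists>K. tight_component V E (As i \<inter> Bs i) K \<and> w \<in> K
                                  \<and> K \<subseteq> Bs i - As i})
       \<and> nbh V E ((\<Inter>i. Bs i) - (\<Union>i. As i)) = (\<Union>i. As i) \<inter> (\<Inter>i. Bs i)"
proof -
  have "mono As" and "antimono Bs"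
    using assms(4) by (auto simp: sep_le_def intro!: monoI antimonoI)
  then show ?thesis
    by (intro conjI ballI limit_separator_persistent_neighbour[OF assms(1-3)]
        nbh_limit_side[OF assms(1-3)])
qed

end
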